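(* Let $f_{\mathrm{MCP}}$ be the maximum coordinate plurality rule. In the $\ell^1$ linear social choice setting, the worst-case distortion of $f_{\mathrm{MCP}}$ satisfies $\mathrm{D}(f_{\mathrm{MCP}}) = O(d^3)$.
   Context: Setting ($\ell^1$ linear social choice). Fix a dimension $d\ge 1$ and let $\Delta_d=\{x\in\mathbb{R}^d_{\ge 0}:\sum_i x^i=1\}$ (superscripts denote coordinates). An instance consists of a finite set $V$ of $n$ voters and a finite set $C$ of $m$ candidates, each identified with a vector in $\Delta_d$, with the expressiveness assumption that every voter vector lies in $\mathrm{Cone}(C)$, the set of nonnegative linear combinations of candidate vectors. Voter $v$'s utility for candidate $c$ is $u_v(c)=v^\top c$. Each voter reports a ranking $\sigma_v$ of $C$ consistent with its utilities ($c$ is ranked above $c'$ only if $u_v(c)\ge u_v(c')$; ties broken arbitrarily); $\sigma=(\sigma_v)_{v\in V}$ is the preference profile. The utilitarian welfare of $c$ is $\mathrm{UW}(c)=\sum_{v\in V}u_v(c)$. A (possibly randomized) voting rule $f$ outputs a distribution over $C$ based on the profile (and, when its definition uses them, the candidate vectors), but never sees the voter vectors. Its distortion on an instance is $\max_{c\in C}\mathrm{UW}(c)/\mathbb{E}_{c\sim f}[\mathrm{UW}(c)]$, and its worst-case distortion $\mathrm{D}(f)$ is the supremum of this ratio over all instances (all $n,m$, all consistent rankings), viewed as a function of $d$. Maximum coordinate plurality: form a set $\hat C\subseteq C$ containing, for each coordinate $i\in[d]$, one candidate $c\in C$ maximizing the coordinate $c^i$ over $C$ (so $|\hat C|\le d$);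 restrict every voter's ranking to $\hat C$ and output a plurality winner (a candidate of $\hat C$ ranked first among $\hat C$ by the largest number of voters, ties broken arbitrarily). *)

theory Defs
  imports Main "HOL-Library.FuncSet" Complex_Main
begin

type_synonym vec = "nat \<Rightarrow> real"

definition in_simplex :: "nat \<Rightarrow> vec \<Rightarrow> bool" where
  "in_simplex d x \<longleftrightarrow> (\<forall>i<d. 0 \<le> x i) \<and> (\<forall>i\<ge>d. x i = 0) \<and> (\<Sum>i<d. x i) = 1"

definition in_cone :: "nat \<Rightarrow> vec set \<Rightarrow> vec \<Rightarrow> bool" where
  "in_cone d C x \<longleftrightarrow> (\<exists>a::vec \<Rightarrow> real. (\<forall>c\<in>C. 0 \<le> a c) \<and>
      (\<forall>i<d. x i = (\<Sum>c\<in>C. a c * c i)))"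

definition util :: "nat \<Rightarrow> vec \<Rightarrow> vec \<Rightarrow> real" where
  "util d v c = (\<Sum>i<d. v i * c i)"

definition lsc_instance :: "nat \<Rightarrow> 'v set \<Rightarrow> ('v \<Rightarrow> vec) \<Rightarrow> vec set \<Rightarrow> bool" where
  "lsc_instance d V vv C \<longleftrightarrow> finite V \<and> finite C \<and> (\<forall>c\<in>C. in_simplex d c) \<and>
     (\<forall>v\<in>V. in_simplex d (vv v) \<and> in_cone d C (vv v))"

definition consistent_ranking :: "nat \<Rightarrow> vec set \<Rightarrow> vec \<Rightarrow> vec list \<Rightarrow> bool" where
  "consistent_ranking d C v r \<longleftrightarrow> distinct r \<and> set r = C \<and>
     (\<forall>i j. i < j \<longrightarrow> j < length r \<longrightarrow> util d v (r ! j) \<le> util d v (r ! i))"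

definition consistent_profile ::
    "nat \<Rightarrow> 'v set \<Rightarrow> ('v \<Rightarrow> vec) \<Rightarrow> vec set \<Rightarrow> ('v \<Rightarrow> vec list) \<Rightarrow> bool" where
  "consistent_profile d V vv C \<sigma> \<longleftrightarrow> (\<forall>v\<in>V. consistent_ranking d C (vv v) (\<sigma> v))"

definition UW :: "nat \<Rightarrow> 'v set \<Rightarrow> ('v \<Rightarrow> vec) \<Rightarrow> vec \<Rightarrow> real" where
  "UW d V vv c = (\<Sum>v\<in>V. util d (vv v) c)"

definition mcp_set :: "nat \<Rightarrow> vec set \<Rightarrow> vec set \<Rightarrow> bool" where
  "mcp_set d C Ch \<longleftrightarrow> (\<exists>sel. (\<forall>i<d. sel i \<in> C \<and> (\<forall>c\<in>C. c i \<le> sel i i)) \<and>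
                               Ch = sel ` {..<d})"

definition top_in :: "vec set \<Rightarrow> vec list \<Rightarrow> vec" where
  "top_in S r = hd (filter (\<lambda>c. c \<in> S) r)"

definition plurality_winner :: "'v set \<Rightarrow> ('v \<Rightarrow> vec list) \<Rightarrow> vec set \<Rightarrow> vec \<Rightarrow> bool" where
  "plurality_winner V \<sigma> S w \<longleftrightarrow> w \<in> S \<and>
     (\<forall>c\<in>S. card {v\<in>V. top_in S (\<sigma> v) = c} \<le> card {v\<in>V. top_in S (\<sigma> v) = w})"

text \<open>Possible outputs of maximum coordinate plurality (any tie-breaking).\<close>
definition mcp_outcome :: "nat \<Rightarrow> 'v set \<Rightarrow> vec set \<Rightarrow> ('v \<Rightarrow> vec list) \<Rightarrow> vec \<Rightarrow> bool" where
  "mcp_outcome d V C \<sigma> w \<longleftrightarrow> (\<exists>Ch. mcp_set d C Ch \<and> plurality_winner V \<sigma> Ch w)"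

end

theory Submission
  imports Defs
begin

text \<open>
  Every voter vector is a convex combination of candidates, so each of its coordinates is
  dominated by the maximum of that coordinate over the candidates. A voter has some
  coordinate \<open>j\<close> of size at least \<open>1/d\<close>, hence values the maximizer of coordinate \<open>j\<close>,
  and therefore its favourite among the \<open>d\<close> maximizers, at least \<open>1/d\<^sup>2\<close>. The plurality
  winner among the maximizers is the favourite of at least \<open>n/d\<close> voters, so its welfare is
  at least \<open>n/d\<^sup>3\<close>, while no candidate has welfare above \<open>n\<close>.
\<close>

lemma sorted_wrt_le_hd_filter:
  fixes f :: "'a \<Rightarrow> 'b::preorder"
  assumes "sorted_wrt (\<lambda>a b. f b \<le> f a) xs" "x \<in> set xs" "P x"
  shows "f x \<le> f (hd (filter P xs))"
  using assms by (induction xs) auto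

lemma top_in_mem:
  assumes "x \<in> set r" "x \<in> S"
  shows "top_in S r \<in> S"
proof -
  have "filter (\<lambda>c. c \<in> S) r \<noteq> []" using assms by (auto simp: filter_empty_conv)
  then show ?thesis unfolding top_in_def using hd_in_set by fastforce
qed

lemma consistent_ranking_le_top_in:
  assumes "consistent_ranking d C v r" "x \<in> C" "x \<in> S"
  shows "util d v x \<le> util d v (top_in S r)"
proof -
  have "sorted_wrt (\<lambda>a b. util d v b \<le> util d v a) r"
    using assms(1) by (simp add: consistent_ranking_def sorted_wrt_iff_nth_less)
  moreover have "x \<in> set r" using assms(1,2) by (simp add: consistent_ranking_def)
  ultimately show ?thesis
    unfolding top_in_def using assms(3) by (rule sorted_wrt_le_hd_filter[where P = "\<lambda>c. c \<in> S"])
qed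

lemma in_simplex_dim_pos: "in_simplex d x \<Longrightarrow> 0 < d"
  by (cases d) (simp_all add: in_simplex_def)

lemma in_simplex_coord_le_1:
  assumes "in_simplex d c" "i < d"
  shows "c i \<le> 1"
proof -
  have "c i \<le> (\<Sum>k<d. c k)"
    using assms by (intro member_le_sum) (auto simp: in_simplex_def)
  then show ?thesis using assms by (simp add: in_simplex_def)
qed

lemma in_simplex_ex_coord_ge:
  assumes "in_simplex d v"
  obtains j where "j < d" "1 / real d \<le> v j"
proof (rule ccontr)
  assume "\<not> thesis"
  with that have "\<forall>j<d. v j < 1 / real d" by (meson not_le)
  moreover have d_pos: "0 < d" using in_simplex_dim_pos[OF assms] .
  ultimately have "(\<Sum>j<d. v j) < (\<Sum>j<d. 1 / real d)"
    by (intro sum_strict_mono) auto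
  then show False using assms d_pos by (simp add: in_simplex_def)
qed

lemma util_nonneg: "in_simplex d v \<Longrightarrow> in_simplex d c \<Longrightarrow> 0 \<le> util d v c"
  unfolding util_def in_simplex_def by (auto intro!: sum_nonneg)

lemma util_le_1:
  assumes "in_simplex d v" "in_simplex d c"
  shows "util d v c \<le> 1"
proof -
  have "util d v c \<le> (\<Sum>i<d. v i)"
    unfolding util_def
    using assms in_simplex_coord_le_1[OF assms(2)]
    by (intro sum_mono) (auto simp: in_simplex_def intro: mult_left_le)
  then show ?thesis using assms(1) by (simp add: in_simplex_def)
qed

lemma util_ge_coord_product:
  assumes "in_simplex d v" "in_simplex d c" "j < d"
  shows "v j * c j \<le> util d v c"
  unfolding util_def using assms
  by (intro member_le_sum[where f = "\<lambda>i. v i * c i"]) (auto simp: in_simplex_def)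

lemma in_cone_simplex_convex:
  assumes "in_simplex d v" "in_cone d C v" "finite C" "\<forall>c\<in>C. in_simplex d c"
  obtains a where "\<forall>c\<in>C. 0 \<le> a c" "sum a C = 1" "\<forall>i<d. v i = (\<Sum>c\<in>C. a c * c i)"
proof -
  obtain a where a: "\<forall>c\<in>C. 0 \<le> a c" "\<forall>i<d. v i = (\<Sum>c\<in>C. a c * c i)"
    using assms(2) by (auto simp: in_cone_def)
  have "1 = (\<Sum>i<d. \<Sum>c\<in>C. a c * c i)"
    using assms(1) a(2) by (simp add: in_simplex_def)
  also have "\<dots> = (\<Sum>c\<in>C. a c * (\<Sum>i<d. c i))"
    by (subst sum.swap) (simp add: sum_distrib_left)
  also have "\<dots> = sum a C"
    using assms(4) by (auto simp: in_simplex_def)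
  finally show thesis using that a by simp
qed

lemma in_cone_simplex_coord_le:
  assumes "in_simplex d v" "in_cone d C v" "finite C" "\<forall>c\<in>C. in_simplex d c"
    and "\<forall>c\<in>C. c j \<le> b" "j < d"
  shows "v j \<le> b"
proof -
  obtain a where a: "\<forall>c\<in>C. 0 \<le> a c" "sum a C = 1" "\<forall>i<d. v i = (\<Sum>c\<in>C. a c * c i)"
    using in_cone_simplex_convex[OF assms(1-4)] .
  have "v j = (\<Sum>c\<in>C. a c * c j)" using a(3) assms(6) by simp
  also have "\<dots> \<le> (\<Sum>c\<in>C. a c * b)"
    using a(1) assms(5) by (intro sum_mono mult_left_mono) auto
  also have "\<dots> = b" using a(2) by (simp add: sum_distrib_right[symmetric])
  finally show ?thesis .
qed

lemma util_top_in_mcp_set_ge: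
  assumes "in_simplex d v" "in_cone d C v" "finite C" "\<forall>c\<in>C. in_simplex d c"
    and "consistent_ranking d C v r" "mcp_set d C Ch"
  shows "1 / real d ^ 2 \<le> util d v (top_in Ch r)"
proof -
  obtain sel where sel: "\<forall>i<d. sel i \<in> C \<and> (\<forall>c\<in>C. c i \<le> sel i i)" and Ch: "Ch = sel ` {..<d}"
    using assms(6) by (auto simp: mcp_set_def)
  obtain j where j: "j < d" "1 / real d \<le> v j"
    using in_simplex_ex_coord_ge[OF assms(1)] .
  have sj: "sel j \<in> C" "sel j \<in> Ch" using sel Ch j(1) by auto
  have "v j \<le> sel j j"
    using in_cone_simplex_coord_le[OF assms(1-4)] sel j(1) by blast
  moreover have "0 \<le> 1 / real d" by simp
  ultimately have "1 / real d * (1 / real d) \<le> v j * sel j j"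
    using j(2) by (intro mult_mono) linarith+
  then have "1 / real d ^ 2 \<le> v j * sel j j"
    by (simp add: power2_eq_square)
  also have "\<dots> \<le> util d v (sel j)"
    using util_ge_coord_product assms(1,4) sj(1) j(1) by blast
  also have "\<dots> \<le> util d v (top_in Ch r)"
    using consistent_ranking_le_top_in[OF assms(5) sj] .
  finally show ?thesis .
qed

lemma plurality_winner_card_ge:
  assumes "plurality_winner V \<sigma> S w" "finite S" "\<forall>v\<in>V. top_in S (\<sigma> v) \<in> S"
  shows "card V \<le> card S * card {v\<in>V. top_in S (\<sigma> v) = w}"
proof -
  have "V = (\<Union>x\<in>S. {v\<in>V. top_in S (\<sigma> v) = x})" using assms(3) by auto
  then have "card V \<le> (\<Sum>x\<in>S. card {v\<in>V. top_in S (\<sigma> v) = x})"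
    by (metis card_UN_le[OF assms(2)])
  also have "\<dots> \<le> (\<Sum>x\<in>S. card {v\<in>V. top_in S (\<sigma> v) = w})"
    using assms(1) unfolding plurality_winner_def by (intro sum_mono) auto
  finally show ?thesis by simp
qed

lemma UW_le_card:
  assumes "lsc_instance d V vv C" "c \<in> C"
  shows "UW d V vv c \<le> real (card V)"
proof -
  have "UW d V vv c \<le> (\<Sum>v\<in>V. 1)"
    unfolding UW_def using assms util_le_1 by (intro sum_mono) (auto simp: lsc_instance_def)
  then show ?thesis by simp
qed

lemma mcp_set_subset: "mcp_set d C Ch \<Longrightarrow> Ch \<subseteq> C"
  by (auto simp: mcp_set_def)

lemma card_mcp_set_le: "mcp_set d C Ch \<Longrightarrow> card Ch \<le> d"
  by (auto simp: mcp_set_def intro: card_image_le[of "{..<d}", simplified])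

lemma UW_mcp_outcome_ge:
  assumes inst: "lsc_instance d V vv C" and prof: "consistent_profile d V vv C \<sigma>"
    and out: "mcp_outcome d V C \<sigma> w"
  shows "real (card V) \<le> real d ^ 3 * UW d V vv w"
proof -
  have finV: "finite V" and finC: "finite C" and candS: "\<forall>c\<in>C. in_simplex d c"
    and vS: "\<forall>v\<in>V. in_simplex d (vv v) \<and> in_cone d C (vv v)"
    using inst by (auto simp: lsc_instance_def)
  have rank: "\<forall>v\<in>V. consistent_ranking d C (vv v) (\<sigma> v)"
    using prof by (simp add: consistent_profile_def)
  obtain Ch where Ch: "mcp_set d C Ch" and pw: "plurality_winner V \<sigma> Ch w"
    using out by (auto simp: mcp_outcome_def)
  have wCh: "w \<in> Ch" using pw by (simp add: plurality_winner_def)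
  then have wC: "w \<in> C" using mcp_set_subset[OF Ch] by blast
  then have d_pos: "0 < d" using candS in_simplex_dim_pos by blast
  define W where "W = {v\<in>V. top_in Ch (\<sigma> v) = w}"
  have "\<forall>v\<in>V. top_in Ch (\<sigma> v) \<in> Ch"
    using rank wC wCh top_in_mem by (metis consistent_ranking_def)
  then have "card V \<le> card Ch * card W"
    unfolding W_def using plurality_winner_card_ge pw finite_subset[OF mcp_set_subset[OF Ch] finC]
    by blast
  also have "\<dots> \<le> d * card W"
    using card_mcp_set_le[OF Ch] by (rule mult_right_mono) simp
  finally have "real (card V) \<le> real d * real (card W)"
    by (metis of_nat_le_iff of_nat_mult)
  also have "\<dots> = real d ^ 3 * (\<Sum>v\<in>W. 1 / real d ^ 2)"
    using d_pos by (simp add: power2_eq_square power3_eq_cube)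
  also have "\<dots> \<le> real d ^ 3 * (\<Sum>v\<in>W. util d (vv v) w)"
    using util_top_in_mcp_set_ge[OF _ _ finC candS _ Ch] vS rank
    by (intro mult_left_mono sum_mono) (auto simp: W_def)
  also have "\<dots> \<le> real d ^ 3 * UW d V vv w"
    unfolding UW_def using finV util_nonneg vS candS wC
    by (intro mult_left_mono sum_mono2) (auto simp: W_def)
  finally show ?thesis .
qed

theorem theorem3:
  "\<exists>K::real. \<exists>d0::nat. \<forall>d\<ge>d0. \<forall>(V::nat set) vv C \<sigma> w.
     lsc_instance d V vv C \<longrightarrow> consistent_profile d V vv C \<sigma> \<longrightarrow> mcp_outcome d V C \<sigma> w \<longrightarrow>
     (\<forall>c\<in>C. UW d V vv c \<le> K * real d ^ 3 * UW d V vv w)"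
proof (intro exI[of _ 1] exI[of _ 0] allI impI ballI)
  fix d :: nat and V :: "nat set" and vv C \<sigma> w c
  assume "lsc_instance d V vv C" "consistent_profile d V vv C \<sigma>" "mcp_outcome d V C \<sigma> w"
    and "c \<in> C"
  then have "UW d V vv c \<le> real (card V)" and "real (card V) \<le> real d ^ 3 * UW d V vv w"
    using UW_le_card UW_mcp_outcome_ge by blast+
  then show "UW d V vv c \<le> 1 * real d ^ 3 * UW d V vv w" by simp
qed

end
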